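(* Let $U,V$ be finite-dimensional vector spaces over a field $\mathbb{K}$, let $\mathcal{S}$ be a linear subspace of $\mathcal{L}(U,V)$ with $\operatorname{codim}_{\mathcal{L}(U,V)}\mathcal{S}\leq 2\dim V-3$, and let $F:\mathcal{S}\to V$ be a range-compatible group homomorphism. Assume there are three linearly independent vectors $y_1,y_2,y_3\in V$ such that $F\bmod y_i$ is local for each $i\in\{1,2,3\}$. Then $F$ is local.
   Context: A map $F:\mathcal{S}\to V$ is range-compatible when $F(s)\in\operatorname{im}s$ for all $s\in\mathcal{S}$, and local when there is $x\in U$ with $F(s)=s(x)$ for all $s$. For nonzero $y\in V$, let $\pi:V\to V/\mathbb{K}y$ be the canonical projection; $\mathcal{S}\bmod y:=\{\pi\circ s: s\in\mathcal{S}\}\subset\mathcal{L}(U,V/\mathbb{K}y)$, and $F\bmod y:\mathcal{S}\bmod y\to V/\mathbb{K}y$ is the unique map with $(F\bmod y)(\pi\circ s)=\pi(F(s))$ for all $s\in\mathcal{S}$ (well defined and range-compatible since $F$ is). Thus $F\bmod y$ is local iff there is $x\in U$ with $F(s)-s(x)\in\mathbb{K}y$ for all $s\in\mathcal{S}$. *)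

theory Defs
  imports "HOL-Analysis.Analysis"
begin

text \<open>Linear maps U \<rightarrow> V between finite-dimensional K-spaces are represented by
  matrices in 'k^'n^'m (U = K^'n, V = K^'m, after choosing bases); s x is 's *v x'.\<close>

definition mscale :: "'k::field \<Rightarrow> 'k^'n^'m \<Rightarrow> 'k^'n^'m" where
  "mscale c A = (\<chi> i j. c * A $ i $ j)"

lemma vector_space_mscale: "vector_space (mscale :: 'k::field \<Rightarrow> 'k^'n^'m \<Rightarrow> 'k^'n^'m)"
  by unfold_locales (simp_all add: mscale_def vec_eq_iff algebra_simps)

interpretation mat: vector_space "mscale :: 'k::field \<Rightarrow> 'k^'n^'m \<Rightarrow> 'k^'n^'m"
  by (rule vector_space_mscale)

definition range_compatible :: "('k::field^'n^'m) set \<Rightarrow> ('k^'n^'m \<Rightarrow> 'k^'m) \<Rightarrow> bool" where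
  "range_compatible S F \<longleftrightarrow> (\<forall>s\<in>S. F s \<in> range (\<lambda>x. s *v x))"

definition is_local :: "('k::field^'n^'m) set \<Rightarrow> ('k^'n^'m \<Rightarrow> 'k^'m) \<Rightarrow> bool" where
  "is_local S F \<longleftrightarrow> (\<exists>x. \<forall>s\<in>S. F s = s *v x)"

definition local_mod :: "('k::field^'n^'m) set \<Rightarrow> ('k^'n^'m \<Rightarrow> 'k^'m) \<Rightarrow> 'k^'m \<Rightarrow> bool" where
  "local_mod S F y \<longleftrightarrow> (\<exists>x. \<forall>s\<in>S. \<exists>c. F s - s *v x = c *s y)"

end

theory Submission
  imports Defs
begin

text \<open>Let x_i witness that F mod y_i is local, so F s - s x_i = c_i y_i for every s \<in> S.
  Then each s \<in> S sends a = x1 - x2 to c2 y2 - c1 y1 and b = x1 - x3 to c3 y3 - c1 y1,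
  with the same c1. If a and b are linearly dependent, a nontrivial relation forces c1 = 0
  for all s, or c2 = 0 for all s, so x1 or x2 is a global witness. Otherwise the matrices
  with this coupled behaviour on a and b span a space of dimension 3 + (n - 2) m; S lies
  in this space and, by the codimension bound, has at least this dimension, so S is all
  of it. In particular S contains s0 with s0 a = y2 - y1, s0 b = y3 - y1 and
  im s0 \<subseteq> span {y2 - y1, y3 - y1}. For s0 the coefficient c1 is 1, so y1 = s0 (u - x1)
  where F s0 = s0 u, which contradicts the independence of y1, y2, y3.\<close>

lemma mscale_mult_vec:
  fixes A :: "'k::field^'n^'m"
  shows "mscale c A *v x = c *s (A *v x)"
  by (simp add: mscale_def matrix_vector_mult_def vec_eq_iff sum_distrib_left algebra_simps)

lemma sum_mult_vec:
  fixes f :: "'i \<Rightarrow> 'k::field^'n^'m"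
  shows "sum f I *v x = (\<Sum>i\<in>I. f i *v x)"
  by (induction I rule: infinite_finite_induct) (auto simp: matrix_vector_mult_add_rdistrib)

lemma matrix_eq_on_basis:
  fixes A B :: "'k::field^'n^'m"
  assumes "vec.span E = UNIV" and "\<And>w. w \<in> E \<Longrightarrow> A *v w = B *v w"
  shows "A = B"
  unfolding matrix_eq
  using vec.linear_eq_on[OF matrix_vector_mul_linear_gen matrix_vector_mul_linear_gen] assms
  by blast

lemma (in vector_space) span_subset_subspace_if_card_le_dim:
  assumes S: "subspace S" and B: "finite B" "S \<subseteq> span B" "card B \<le> dim S"
  shows "span B \<subseteq> S"
proof
  fix x assume x: "x \<in> span B"
  show "x \<in> S"
  proof (rule ccontr)
    assume "x \<notin> S"
    obtain C where C: "C \<subseteq> S" "independent C" "S \<subseteq> span C" "card C = dim S"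
      using basis_exists[of S] by blast
    have "x \<notin> span C"
      using \<open>x \<notin> S\<close> C(1) S span_mono span_eq_iff by blast
    then have "independent (insert x C)"
      using C(2) by (rule independent_insertI)
    moreover have "insert x C \<subseteq> span B"
      using x C(1) B(2) by blast
    ultimately have "finite (insert x C)" "card (insert x C) \<le> card B"
      using independent_span_bound[OF B(1), of "insert x C"] by simp_all
    then show False
      using C(1,4) B(3) \<open>x \<notin> S\<close> by (subst (asm) card_insert_disjoint) auto
  qed
qed

definition basis_map :: "('k::field^'n) set \<Rightarrow> 'k^'n \<Rightarrow> 'k^'m \<Rightarrow> 'k^'n^'m" where
  "basis_map E w v = matrix (vec.construct E (\<lambda>u. if u = w then v else 0))"

lemma basis_map_apply:
  assumes "vec.independent E" "u \<in> E"
  shows "basis_map E w v *v u = (if u = w then v else 0)"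
  using assms by (simp add: basis_map_def matrix_works vec.linear_construct vec.construct_basis)

lemma basis_map_in_span:
  assumes "vec.independent E"
  shows "basis_map E w v *v x \<in> vec.span {v}"
proof -
  have "basis_map E w v *v x \<in> vec.span ((\<lambda>u. if u = w then v else 0) ` E)"
    using assms unfolding basis_map_def matrix_works[OF vec.linear_construct[OF assms]]
    by (rule vec.construct_in_span)
  moreover have "vec.span ((\<lambda>u. if u = w then v else 0) ` E) \<subseteq> vec.span {0, v}"
    by (rule vec.span_mono) auto
  ultimately show ?thesis
    by auto
qed

context
  fixes E :: "('k::field^'n) set"
  assumes indep: "vec.independent E" and spanning: "vec.span E = UNIV"
begin

lemma basis_map_zero: "basis_map E w 0 = (0 :: 'k^'n^'m)"
  by (rule matrix_eq_on_basis[OF spanning]) (simp add: basis_map_apply[OF indep])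

lemma matrix_eq_sum_basis_map:
  fixes r :: "'k^'n^'m"
  shows "r = (\<Sum>w\<in>E. basis_map E w (r *v w))"
proof (rule matrix_eq_on_basis[OF spanning])
  fix u assume u: "u \<in> E"
  have "(\<Sum>w\<in>E. basis_map E w (r *v w)) *v u = (\<Sum>w\<in>E. if u = w then r *v w else 0)"
    by (simp add: sum_mult_vec basis_map_apply[OF indep u])
  also have "\<dots> = r *v u"
    using vec.finiteI_independent[OF indep] u by (simp add: sum.delta)
  finally show "r *v u = (\<Sum>w\<in>E. basis_map E w (r *v w)) *v u" ..
qed

lemma basis_map_eq_sum_axis:
  fixes v :: "'k^'m"
  shows "basis_map E w v = (\<Sum>k\<in>UNIV. mscale (v $ k) (basis_map E w (axis k 1)))"
proof (rule matrix_eq_on_basis[OF spanning])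
  fix u assume u: "u \<in> E"
  have "(\<Sum>k\<in>UNIV. mscale (v $ k) (basis_map E w (axis k 1))) *v u
      = (if u = w then (\<Sum>k\<in>UNIV. v $ k *s axis k 1) else 0)"
    by (simp add: sum_mult_vec mscale_mult_vec basis_map_apply[OF indep u])
  then show "basis_map E w v *v u = (\<Sum>k\<in>UNIV. mscale (v $ k) (basis_map E w (axis k 1))) *v u"
    by (simp add: basis_map_apply[OF indep u] basis_expansion)
qed

lemma vanishing_matrix_in_span:
  fixes r :: "'k^'n^'m"
  assumes "D \<subseteq> E" and vanish: "\<And>d. d \<in> D \<Longrightarrow> r *v d = 0"
  shows "r \<in> mat.span ((\<lambda>(u, k). basis_map E u (axis k 1)) ` ((E - D) \<times> UNIV))"
    (is "_ \<in> mat.span ?G")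
proof -
  have "finite E"
    using vec.finiteI_independent[OF indep] .
  have "r = (\<Sum>w\<in>E. basis_map E w (r *v w))"
    by (rule matrix_eq_sum_basis_map)
  also have "\<dots> = (\<Sum>w\<in>E - D. basis_map E w (r *v w))"
    using \<open>finite E\<close> assms by (intro sum.mono_neutral_right) (auto simp: basis_map_zero)
  also have "\<dots> \<in> mat.span ?G"
  proof (intro mat.span_sum)
    fix w assume "w \<in> E - D"
    then have "basis_map E w (axis k 1) \<in> ?G" for k
      by force
    then show "basis_map E w (r *v w) \<in> mat.span ?G"
      by (subst basis_map_eq_sum_axis) (intro mat.span_sum mat.span_scale mat.span_base)
  qed
  finally show ?thesis .
qed

lemma card_vec_basis: "card E = CARD('n)"
  using vec.basis_card_eq_dim[of E UNIV] indep spanning by (simp add: card_cart_basis)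

lemma coupled_matrix_in_span:
  fixes s :: "'k^'n^'m"
  assumes "a \<in> E" "b \<in> E" "a \<noteq> b"
    and sa: "s *v a = c2 *s y2 - c1 *s y1" and sb: "s *v b = c3 *s y3 - c1 *s y1"
  shows "s \<in> mat.span ({basis_map E a y1 + basis_map E b y1, basis_map E a y2, basis_map E b y3}
      \<union> (\<lambda>(u, k). basis_map E u (axis k 1)) ` ((E - {a, b}) \<times> UNIV))"
    (is "_ \<in> mat.span ({?t1, ?t2, ?t3} \<union> ?G)")
proof -
  define r where "r = s - (mscale c2 ?t2 + mscale c3 ?t3 - mscale c1 ?t1)"
  have "r *v d = 0" if "d \<in> {a, b}" for d
    using that assms by (auto simp: r_def algebra_simps mscale_mult_vec basis_map_apply[OF indep])
  then have "r \<in> mat.span ?G"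
    using assms(1,2) by (intro vanishing_matrix_in_span) auto
  then have "r \<in> mat.span ({?t1, ?t2, ?t3} \<union> ?G)"
    using mat.span_mono[of ?G] by blast
  moreover have "mscale c2 ?t2 + mscale c3 ?t3 - mscale c1 ?t1 \<in> mat.span ({?t1, ?t2, ?t3} \<union> ?G)"
    by (intro mat.span_add mat.span_diff mat.span_scale mat.span_base) auto
  ultimately show ?thesis
    using mat.span_add unfolding r_def by fastforce
qed

end

lemma subspace_contains_coupled_map:
  fixes S :: "('k::field^'n^'m) set" and a b :: "'k^'n" and y1 y2 y3 :: "'k^'m"
  assumes S: "mat.subspace S"
    and dim: "CARD('n) * CARD('m) + 3 \<le> mat.dim S + 2 * CARD('m)"
    and ab: "vec.independent {a, b}" "a \<noteq> b"
    and coupled: "\<And>s. s \<in> S \<Longrightarrow>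
      \<exists>c1 c2 c3. s *v a = c2 *s y2 - c1 *s y1 \<and> s *v b = c3 *s y3 - c1 *s y1"
  obtains s0 where "s0 \<in> S" "s0 *v a = y2 - y1" "s0 *v b = y3 - y1"
    "\<And>u. s0 *v u \<in> vec.span {y2 - y1, y3 - y1}"
proof -
  define E where "E = vec.extend_basis {a, b}"
  have indep: "vec.independent E" and spanning: "vec.span E = UNIV" and "{a, b} \<subseteq> E"
    unfolding E_def using vec.extend_basis_superset vec.independent_extend_basis ab(1) by auto
  then have E: "a \<in> E" "b \<in> E" "finite E"
    using vec.finiteI_independent by auto
  define P where "P = (E - {a, b}) \<times> (UNIV :: 'm set)"
  define B where "B = {basis_map E a y1 + basis_map E b y1, basis_map E a y2, basis_map E b y3}
      \<union> (\<lambda>(u, k). basis_map E u (axis k 1)) ` P"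
  have finite_B: "finite B"
    using E(3) by (simp add: B_def P_def)
  have "S \<subseteq> mat.span B"
    using coupled coupled_matrix_in_span[OF indep spanning E(1,2) ab(2)] by (force simp: B_def P_def)
  moreover have "card B \<le> mat.dim S"
  proof -
    have "2 \<le> CARD('n)"
      using card_mono[OF E(3) \<open>{a, b} \<subseteq> E\<close>] ab(2) card_vec_basis[OF indep spanning] by simp
    moreover have "card P = (CARD('n) - 2) * CARD('m)"
      using E ab(2) card_vec_basis[OF indep spanning] by (simp add: P_def card_cartesian_product)
    ultimately have "card P + 2 * CARD('m) = CARD('n) * CARD('m)"
      by (metis add_mult_distrib le_add_diff_inverse2)
    moreover have "card B \<le> 3 + card P"
    proof -
      have "card B \<le> card {basis_map E a y1 + basis_map E b y1, basis_map E a y2, basis_map E b y3}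
          + card ((\<lambda>(u, k). basis_map E u (axis k 1)) ` P)"
        unfolding B_def by (rule card_Un_le)
      also have "\<dots> \<le> 3 + card P"
        using card_image_le[of P] E(3) by (intro add_mono) (auto simp: card_insert_if P_def)
      finally show ?thesis .
    qed
    ultimately show ?thesis
      using dim by linarith
  qed
  ultimately have "mat.span B \<subseteq> S"
    using mat.span_subset_subspace_if_card_le_dim[OF S finite_B] by blast
  define s0 where "s0 = basis_map E a (y2 - y1) + basis_map E b (y3 - y1)"
  have s0a: "s0 *v a = y2 - y1" and s0b: "s0 *v b = y3 - y1"
    using E(1,2) ab(2) by (simp_all add: s0_def matrix_vector_mult_add_rdistrib basis_map_apply[OF indep])
  have "s0 *v a = 1 *s y2 - 1 *s y1" "s0 *v b = 1 *s y3 - 1 *s y1"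
    by (simp_all add: s0a s0b)
  then have "s0 \<in> mat.span B"
    unfolding B_def P_def by (rule coupled_matrix_in_span[OF indep spanning E(1,2) ab(2)])
  moreover have "s0 *v u \<in> vec.span {y2 - y1, y3 - y1}" for u
    using basis_map_in_span[OF indep] vec.span_mono[of "{_}" "{y2 - y1, y3 - y1}"]
    unfolding s0_def matrix_vector_mult_add_rdistrib by (blast intro: vec.span_add)
  ultimately show ?thesis
    using that \<open>mat.span B \<subseteq> S\<close> s0a s0b by blast
qed

lemma independent_pair_if_only_trivial_relation:
  fixes a b :: "'k::field^'n"
  assumes trivial: "\<forall>p q. p *s a + q *s b = 0 \<longrightarrow> p = 0 \<and> q = 0"
  shows "vec.independent {a, b}" and "a \<noteq> b"
proof -
  have "1 *s a + (- 1) *s b \<noteq> 0"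
    using trivial[rule_format, of 1 "- 1"] by auto
  then show "a \<noteq> b"
    by (auto simp: vec_eq_iff)
  have "b \<noteq> 0"
    using trivial[rule_format, of 0 1] by auto
  then have "vec.independent {b}"
    by simp
  moreover have "a \<notin> vec.span {b}"
  proof
    assume "a \<in> vec.span {b}"
    then obtain k where "a = k *s b"
      unfolding vec.span_singleton by blast
    then have "1 *s a + (- k) *s b = 0"
      by (simp add: vec_eq_iff)
    then show False
      using trivial[rule_format, of 1 "- k"] by auto
  qed
  ultimately show "vec.independent {a, b}"
    by (rule vec.independent_insertI[rotated])
qed

lemma mult_vec_witness_diff:
  fixes s :: "'k::field^'n^'m"
  assumes "v - s *v x1 = c1 *s y1" and "v - s *v x2 = c2 *s y2"
  shows "s *v (x1 - x2) = c2 *s y2 - c1 *s y1"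
  using assms by (simp add: matrix_vector_mult_diff_distrib algebra_simps)

context
  fixes S :: "('k::field^'n^'m) set" and F :: "'k^'n^'m \<Rightarrow> 'k^'m"
    and x1 x2 x3 :: "'k^'n" and y1 y2 y3 :: "'k^'m"
  assumes indep_y: "\<forall>a b c. a *s y1 + b *s y2 + c *s y3 = 0 \<longrightarrow> a = 0 \<and> b = 0 \<and> c = 0"
    and witnesses: "\<And>s. s \<in> S \<Longrightarrow> \<exists>c1 c2 c3. F s - s *v x1 = c1 *s y1
      \<and> F s - s *v x2 = c2 *s y2 \<and> F s - s *v x3 = c3 *s y3"
begin

lemma is_local_if_witness_diffs_dependent:
  assumes rel: "p *s (x1 - x2) + q *s (x1 - x3) = 0" and nontrivial: "p \<noteq> 0 \<or> q \<noteq> 0"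
  shows "is_local S F"
proof -
  have coeffs: "(p + q) * c1 = 0 \<and> p * c2 = 0 \<and> q * c3 = 0"
    if "s \<in> S" "F s - s *v x1 = c1 *s y1" "F s - s *v x2 = c2 *s y2" "F s - s *v x3 = c3 *s y3"
    for s c1 c2 c3
  proof -
    have "0 = s *v (p *s (x1 - x2) + q *s (x1 - x3))"
      by (simp only: rel matrix_vector_mult_0_right)
    also have "\<dots> = p *s (s *v (x1 - x2)) + q *s (s *v (x1 - x3))"
      by (simp only: matrix_vector_right_distrib vector_scalar_commute)
    also have "\<dots> = (- ((p + q) * c1)) *s y1 + (p * c2) *s y2 + (q * c3) *s y3"
      unfolding mult_vec_witness_diff[OF that(2,3)] mult_vec_witness_diff[OF that(2,4)]
      by (simp add: vec_eq_iff algebra_simps)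
    finally have "(- ((p + q) * c1)) *s y1 + (p * c2) *s y2 + (q * c3) *s y3 = 0" ..
    from indep_y[rule_format, OF this] show ?thesis
      by simp
  qed
  have "F s = s *v (if p + q = 0 then x2 else x1)" if s: "s \<in> S" for s
  proof -
    obtain c1 c2 c3 where w: "F s - s *v x1 = c1 *s y1" "F s - s *v x2 = c2 *s y2"
        "F s - s *v x3 = c3 *s y3"
      using witnesses[OF s] by blast
    show ?thesis
      using w coeffs[OF s w] nontrivial by (cases "p + q = 0") auto
  qed
  then show ?thesis
    unfolding is_local_def by blast
qed

lemma witness_diffs_dependent:
  assumes S: "mat.subspace S"
    and dim: "CARD('n) * CARD('m) + 3 \<le> mat.dim S + 2 * CARD('m)"
    and compatible: "range_compatible S F"
    and "x1 - x2 \<noteq> x1 - x3"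
  shows "\<not> vec.independent {x1 - x2, x1 - x3}"
proof
  assume "vec.independent {x1 - x2, x1 - x3}"
  note indep_x = this \<open>x1 - x2 \<noteq> x1 - x3\<close>
  have "\<exists>c1 c2 c3. s *v (x1 - x2) = c2 *s y2 - c1 *s y1 \<and> s *v (x1 - x3) = c3 *s y3 - c1 *s y1"
    if "s \<in> S" for s
    using witnesses[OF that] mult_vec_witness_diff by blast
  then obtain s0 where s0: "s0 \<in> S" "s0 *v (x1 - x2) = y2 - y1" "s0 *v (x1 - x3) = y3 - y1"
      and range_s0: "\<And>u. s0 *v u \<in> vec.span {y2 - y1, y3 - y1}"
    using subspace_contains_coupled_map[OF S dim indep_x] by blast
  obtain u where u: "F s0 = s0 *v u"
    using compatible s0(1) unfolding range_compatible_def by blast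
  obtain c1 c2 c3 where w: "F s0 - s0 *v x1 = c1 *s y1" "F s0 - s0 *v x2 = c2 *s y2"
    using witnesses[OF s0(1)] by blast
  have "c2 *s y2 - c1 *s y1 = y2 - y1"
    using mult_vec_witness_diff[OF w] s0(2) by simp
  moreover have "(c1 - 1) *s y1 + (1 - c2) *s y2 + 0 *s y3 = (y2 - y1) - (c2 *s y2 - c1 *s y1)"
    by (simp add: vec_eq_iff algebra_simps)
  ultimately have "(c1 - 1) *s y1 + (1 - c2) *s y2 + 0 *s y3 = 0"
    by simp
  from indep_y[rule_format, OF this] have "c1 = 1"
    by simp
  then have "y1 = s0 *v (u - x1)"
    using w(1) u by (simp add: matrix_vector_mult_diff_distrib)
  then have "y1 \<in> vec.span {y2 - y1, y3 - y1}"
    using range_s0 by simp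
  then obtain k l where "y1 - k *s (y2 - y1) - l *s (y3 - y1) = 0"
    unfolding vec.span_breakdown_eq vec.span_singleton by auto
  then have "(1 + k + l) *s y1 + (- k) *s y2 + (- l) *s y3 = 0"
    by (simp add: vec_eq_iff algebra_simps)
  from indep_y[rule_format, OF this] show False
    by auto
qed

end

theorem lemma4p2:
  fixes S :: "('k::field^'n^'m) set"
    and F :: "'k^'n^'m \<Rightarrow> 'k^'m"
    and y1 y2 y3 :: "'k^'m"
  assumes "mat.subspace S"
    and "int (CARD('n) * CARD('m)) - int (mat.dim S) \<le> 2 * int CARD('m) - 3"
    and "\<forall>s\<in>S. \<forall>t\<in>S. F (s + t) = F s + F t"
    and "range_compatible S F"
    and "\<forall>a b c. a *s y1 + b *s y2 + c *s y3 = 0 \<longrightarrow> a = 0 \<and> b = 0 \<and> c = 0"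
    and "local_mod S F y1" and "local_mod S F y2" and "local_mod S F y3"
  shows "is_local S F"
proof -
  obtain x1 x2 x3 where "\<forall>s\<in>S. \<exists>c. F s - s *v x1 = c *s y1"
      and "\<forall>s\<in>S. \<exists>c. F s - s *v x2 = c *s y2" and "\<forall>s\<in>S. \<exists>c. F s - s *v x3 = c *s y3"
    using assms(6-8) unfolding local_mod_def by blast
  then have witnesses: "\<exists>c1 c2 c3. F s - s *v x1 = c1 *s y1
      \<and> F s - s *v x2 = c2 *s y2 \<and> F s - s *v x3 = c3 *s y3" if "s \<in> S" for s
    using that by blast
  have dim: "CARD('n) * CARD('m) + 3 \<le> mat.dim S + 2 * CARD('m)"
    using assms(2) by linarith
  show ?thesis
  proof (cases "\<exists>p q. (p \<noteq> 0 \<or> q \<noteq> 0) \<and> p *s (x1 - x2) + q *s (x1 - x3) = 0")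
    case True
    then show ?thesis
      using is_local_if_witness_diffs_dependent[OF assms(5) witnesses] by blast
  next
    case False
    then have "\<forall>p q. p *s (x1 - x2) + q *s (x1 - x3) = 0 \<longrightarrow> p = 0 \<and> q = 0"
      by blast
    then have "vec.independent {x1 - x2, x1 - x3}" "x1 - x2 \<noteq> x1 - x3"
      by (rule independent_pair_if_only_trivial_relation)+
    then show ?thesis
      using witness_diffs_dependent[OF assms(5) witnesses assms(1) dim assms(4)] by blast
  qed
qed

end
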